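(* Let $m=p^{a}q^{b}$ with $a,b$ positive integers and $p,q$ distinct primes, and let $n\ge4$. Then there exists an edge-labeling $\alpha$ of the complete graph $K_n$ by ideals of $\mathbb{Z}/m\mathbb{Z}$ such that $\operatorname{rk}[\mathbb{Z}/m\mathbb{Z}]_{(K_n,\alpha)}=1$.
   Context: An edge-labeling assigns to each edge of a graph a nonzero proper ideal of $\mathbb{Z}/m\mathbb{Z}$. A spline on an edge-labeled graph $(G,\alpha)$ with vertices $v_1,\dots,v_n$ is a vector $(f_{v_1},\dots,f_{v_n})\in(\mathbb{Z}/m\mathbb{Z})^n$ with $f_{v_i}-f_{v_j}\in\alpha(v_iv_j)$ for every edge; the splines form a $\mathbb{Z}$-module $[\mathbb{Z}/m\mathbb{Z}]_{(G,\alpha)}$, whose rank $\operatorname{rk}$ is the smallest size of a generating set. *)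

theory Defs
  imports "HOL-Number_Theory.Number_Theory" "HOL-Algebra.Algebra"
begin

text \<open>Z/mZ is modelled by the library ring residue_ring m (carrier {0..m-1}).
  Vertices of K_n are 0..n-1; a spline is a function nat => int that is a residue
  at each vertex i < n and 0 outside.\<close>

definition edge_labeling :: "int \<Rightarrow> nat \<Rightarrow> (nat \<Rightarrow> nat \<Rightarrow> int set) \<Rightarrow> bool" where
  "edge_labeling m n \<alpha> \<longleftrightarrow>
     (\<forall>i<n. \<forall>j<n. i \<noteq> j \<longrightarrow>
        \<alpha> i j = \<alpha> j i \<and> ideal (\<alpha> i j) (residue_ring m) \<and>
        \<alpha> i j \<noteq> {\<zero>\<^bsub>residue_ring m\<^esub>} \<and> \<alpha> i j \<noteq> carrier (residue_ring m))"

definition splines :: "int \<Rightarrow> nat \<Rightarrow> (nat \<Rightarrow> nat \<Rightarrow> int set) \<Rightarrow> (nat \<Rightarrow> int) set" where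
  "splines m n \<alpha> = {f. (\<forall>i<n. f i \<in> carrier (residue_ring m)) \<and> (\<forall>i\<ge>n. f i = 0) \<and>
      (\<forall>i<n. \<forall>j<n. i \<noteq> j \<longrightarrow> (f i - f j) mod m \<in> \<alpha> i j)}"

definition zspan :: "int \<Rightarrow> (nat \<Rightarrow> int) set \<Rightarrow> (nat \<Rightarrow> int) set" where
  "zspan m S = {(\<lambda>i. (\<Sum>s\<in>S. c s * s i) mod m) | c. True}"

definition spline_rank :: "int \<Rightarrow> nat \<Rightarrow> (nat \<Rightarrow> nat \<Rightarrow> int set) \<Rightarrow> nat" where
  "spline_rank m n \<alpha> = (LEAST k. \<exists>S. finite S \<and> card S = k \<and> S \<subseteq> splines m n \<alpha> \<and>
      zspan m S = splines m n \<alpha>)"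

end

theory Submission
  imports Defs
begin

text \<open>Write \<open>m = P Q\<close> with \<open>P = p\<^sup>a\<close>, \<open>Q = q\<^sup>b\<close> coprime. Split the edges of \<open>K\<^sub>n\<close> into
  two connected spanning subgraphs (possible for \<open>n \<ge> 4\<close>: the star from vertex \<open>0\<close> to all
  \<open>i \<ge> 2\<close> plus the edge \<open>12\<close>, and its complement), labelling the first by \<open>(P)\<close> and
  the second by \<open>(Q)\<close>. Along the first subgraph a spline is constant modulo \<open>P\<close>, along the
  second modulo \<open>Q\<close>, hence it is constant modulo \<open>m\<close>. So the splines are exactly the constant
  vectors, generated by the all-ones vector.\<close>

lemma residue_ring_cgenideal_eq:
  fixes m d :: int
  assumes "0 < d" "d dvd m" "0 < m"
  shows "PIdl\<^bsub>residue_ring m\<^esub> d = {x. 0 \<le> x \<and> x < m \<and> d dvd x}"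
proof (intro equalityI subsetI)
  fix x assume "x \<in> PIdl\<^bsub>residue_ring m\<^esub> d"
  then obtain y where "x = (y * d) mod m"
    unfolding cgenideal_def residue_ring_def by auto
  then show "x \<in> {x. 0 \<le> x \<and> x < m \<and> d dvd x}"
    using assms by (simp add: dvd_mod)
next
  fix x assume x: "x \<in> {x. 0 \<le> x \<and> x < m \<and> d dvd x}"
  then obtain k where k: "x = d * k" by blast
  have "0 \<le> k" using x k \<open>0 < d\<close> by (simp add: zero_le_mult_iff)
  moreover have "k \<le> x" using k \<open>0 < d\<close> \<open>0 \<le> k\<close> mult_right_mono[of 1 d k] by simp
  ultimately have "k \<in> {0..m - 1}" using x by simp
  moreover have "x = (k * d) mod m" using x k by (simp add: mult.commute)
  ultimately show "x \<in> PIdl\<^bsub>residue_ring m\<^esub> d"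
    unfolding cgenideal_def residue_ring_def by auto
qed

lemma residue_ring_cgenideal_nonzero_proper:
  fixes m d :: int
  assumes "1 < d" "d < m" "d dvd m"
  shows "ideal (PIdl\<^bsub>residue_ring m\<^esub> d) (residue_ring m)"
    and "PIdl\<^bsub>residue_ring m\<^esub> d \<noteq> {\<zero>\<^bsub>residue_ring m\<^esub>}"
    and "PIdl\<^bsub>residue_ring m\<^esub> d \<noteq> carrier (residue_ring m)"
proof -
  interpret residues m "residue_ring m" by unfold_locales (use assms in linarith)
  show "ideal (PIdl\<^bsub>residue_ring m\<^esub> d) (residue_ring m)"
    by (rule cgenideal_ideal) (use assms in \<open>simp add: res_carrier_eq\<close>)
  have PIdl: "PIdl\<^bsub>residue_ring m\<^esub> d = {x. 0 \<le> x \<and> x < m \<and> d dvd x}"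
    using assms by (intro residue_ring_cgenideal_eq) auto
  have "d \<in> PIdl\<^bsub>residue_ring m\<^esub> d"
    using assms by (simp add: PIdl)
  then show "PIdl\<^bsub>residue_ring m\<^esub> d \<noteq> {\<zero>\<^bsub>residue_ring m\<^esub>}"
    using assms by (auto simp: res_zero_eq)
  have "1 \<notin> PIdl\<^bsub>residue_ring m\<^esub> d"
    using assms by (simp add: PIdl zdvd1_eq)
  moreover have "1 \<in> carrier (residue_ring m)"
    using assms by (simp add: res_carrier_eq)
  ultimately show "PIdl\<^bsub>residue_ring m\<^esub> d \<noteq> carrier (residue_ring m)"
    by blast
qed

lemma splines_dvd_diff_if_rtranclp:
  assumes f: "f \<in> splines m n \<alpha>" and "d dvd m"
    and E: "\<And>i j. E i j \<Longrightarrow> i < n \<and> j < n \<and> i \<noteq> j \<and> (\<forall>x\<in>\<alpha> i j. d dvd x)"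
    and "E\<^sup>*\<^sup>* i j"
  shows "d dvd f i - f j"
  using \<open>E\<^sup>*\<^sup>* i j\<close>
proof (induction rule: rtranclp_induct)
  case base
  then show ?case by simp
next
  case (step k j)
  have "(f k - f j) mod m \<in> \<alpha> k j"
    using f E[OF step.hyps(2)] unfolding splines_def by blast
  then have "d dvd f k - f j"
    using E[OF step.hyps(2)] \<open>d dvd m\<close> by (auto simp: dvd_mod_iff)
  then show ?case
    using dvd_add[OF step.IH] by fastforce
qed

lemma splines_const_if_connected:
  fixes P Q :: int
  assumes f: "f \<in> splines (P * Q) n \<alpha>" and "coprime P Q"
    and conn_P: "(\<lambda>i j. i < n \<and> j < n \<and> i \<noteq> j \<and> (\<forall>x\<in>\<alpha> i j. P dvd x))\<^sup>*\<^sup>* i 0"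
    and conn_Q: "(\<lambda>i j. i < n \<and> j < n \<and> i \<noteq> j \<and> (\<forall>x\<in>\<alpha> i j. Q dvd x))\<^sup>*\<^sup>* i 0"
    and "i < n" "0 < n"
  shows "f i = f 0"
proof -
  have "P dvd f i - f 0"
    using splines_dvd_diff_if_rtranclp[OF f _ _ conn_P] by simp
  moreover have "Q dvd f i - f 0"
    using splines_dvd_diff_if_rtranclp[OF f _ _ conn_Q] by simp
  ultimately have "(P * Q) dvd f i - f 0"
    using \<open>coprime P Q\<close> by (rule divides_mult)
  moreover have "f i \<in> {0..P * Q - 1}" "f 0 \<in> {0..P * Q - 1}"
    using f \<open>i < n\<close> \<open>0 < n\<close> unfolding splines_def residue_ring_def by auto
  ultimately show ?thesis
    by (metis atLeastAtMost_iff mod_eq_dvd_iff mod_pos_pos_trivial zle_diff1_eq)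
qed

definition vertex_const :: "nat \<Rightarrow> int \<Rightarrow> nat \<Rightarrow> int" where
  "vertex_const n c i = (if i < n then c else 0)"

lemma vertex_const_in_splines:
  assumes "edge_labeling m n \<alpha>" "c \<in> carrier (residue_ring m)"
  shows "vertex_const n c \<in> splines m n \<alpha>"
proof -
  have "0 \<in> \<alpha> i j" if "i < n" "j < n" "i \<noteq> j" for i j
    using assms(1) that additive_subgroup.zero_closed[OF ideal.axioms(1)]
    unfolding edge_labeling_def residue_ring_def by fastforce
  then show ?thesis
    using assms(2) unfolding splines_def vertex_const_def by simp
qed

lemma zspan_singleton: "zspan m {v} = {(\<lambda>i. (c * v i) mod m) | c. True}"
proof -
  have "(\<lambda>i. (c * v i) mod m) \<in> zspan m {v}" for c
    unfolding zspan_def by (auto intro: exI[of _ "\<lambda>_. c"])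
  then show ?thesis
    unfolding zspan_def by auto
qed

lemma spline_rank_eq_1_if_splines_const:
  assumes "edge_labeling m n \<alpha>" "1 < m" "0 < n"
    and const: "\<And>f i. f \<in> splines m n \<alpha> \<Longrightarrow> i < n \<Longrightarrow> f i = f 0"
  shows "spline_rank m n \<alpha> = 1"
proof -
  have residue: "c mod m \<in> carrier (residue_ring m)" for c
    using \<open>1 < m\<close> by (simp add: residue_ring_def)
  define e where "e = vertex_const n 1"
  have e: "e \<in> splines m n \<alpha>"
    unfolding e_def using vertex_const_in_splines[OF assms(1) residue[of 1]] \<open>1 < m\<close> by simp
  have span: "zspan m {e} = splines m n \<alpha>"
  proof (intro equalityI subsetI)
    fix g assume "g \<in> zspan m {e}"
    then obtain c where "g = (\<lambda>i. (c * e i) mod m)"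
      unfolding zspan_singleton by blast
    then have "g = vertex_const n (c mod m)"
      unfolding e_def vertex_const_def by (simp add: fun_eq_iff)
    then show "g \<in> splines m n \<alpha>"
      using vertex_const_in_splines[OF assms(1) residue] by simp
  next
    fix f assume f: "f \<in> splines m n \<alpha>"
    then have "f 0 \<in> carrier (residue_ring m)"
      using \<open>0 < n\<close> unfolding splines_def by blast
    then have f0: "0 \<le> f 0" "f 0 < m"
      by (simp_all add: residue_ring_def)
    have "f i = (f 0 * e i) mod m" for i
      using f const[OF f, of i] f0 unfolding e_def vertex_const_def splines_def
      by (cases "i < n") simp_all
    then have "f = (\<lambda>i. (f 0 * e i) mod m)" ..
    then show "f \<in> zspan m {e}"
      unfolding zspan_singleton by blast
  qed
  have "e 0 \<noteq> 0"
    using \<open>0 < n\<close> by (simp add: e_def vertex_const_def)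
  then have no_empty_basis: "zspan m {} \<noteq> splines m n \<alpha>"
    using e unfolding zspan_def by simp (metis singletonD)
  show ?thesis
    unfolding spline_rank_def
  proof (rule Least_equality)
    show "\<exists>S. finite S \<and> card S = 1 \<and> S \<subseteq> splines m n \<alpha> \<and> zspan m S = splines m n \<alpha>"
      using e span by (intro exI[of _ "{e}"]) simp
  next
    fix k assume "\<exists>S. finite S \<and> card S = k \<and> S \<subseteq> splines m n \<alpha> \<and> zspan m S = splines m n \<alpha>"
    then show "1 \<le> k"
      using no_empty_basis by (metis card_0_eq less_one not_le)
  qed
qed

definition split_edge :: "nat \<Rightarrow> nat \<Rightarrow> bool" where
  "split_edge i j \<longleftrightarrow> (min i j = 0 \<and> 2 \<le> max i j) \<or> (min i j = 1 \<and> max i j = 2)"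

lemma split_edge_sym: "split_edge i j = split_edge j i"
  unfolding split_edge_def by (simp add: min.commute max.commute)

lemma split_edge_connected:
  assumes "4 \<le> n" "i < n"
  shows "(\<lambda>i j. i < n \<and> j < n \<and> i \<noteq> j \<and> split_edge i j)\<^sup>*\<^sup>* i 0"
    (is "?E\<^sup>*\<^sup>* i 0")
proof -
  have to_0: "?E\<^sup>*\<^sup>* k 0" if "2 \<le> k" "k < n" for k
    using that by (intro r_into_rtranclp) (simp add: split_edge_def)
  have "?E\<^sup>*\<^sup>* 1 0"
    using assms(1)
    by (intro converse_rtranclp_into_rtranclp[of ?E 1 2] to_0) (auto simp: split_edge_def)
  then show ?thesis
    using to_0 assms(2) by (cases "i \<le> 1") (auto simp: le_Suc_eq)
qed

lemma split_edge_compl_connected: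
  assumes "4 \<le> n" "i < n"
  shows "(\<lambda>i j. i < n \<and> j < n \<and> i \<noteq> j \<and> \<not> split_edge i j)\<^sup>*\<^sup>* i 0"
    (is "?E\<^sup>*\<^sup>* i 0")
proof -
  have "?E\<^sup>*\<^sup>* 1 0"
    using assms(1) by (intro r_into_rtranclp) (simp add: split_edge_def)
  then have to_0: "?E\<^sup>*\<^sup>* k 0" if "3 \<le> k" "k < n" for k
    using that by (intro converse_rtranclp_into_rtranclp[of ?E k 1]) (auto simp: split_edge_def)
  then have "?E\<^sup>*\<^sup>* 2 0"
    using assms(1) by (intro converse_rtranclp_into_rtranclp[of ?E 2 3]) (auto simp: split_edge_def)
  then show ?thesis
    using \<open>?E\<^sup>*\<^sup>* 1 0\<close> to_0 assms(2) by (cases "i \<le> 2") (auto simp: le_Suc_eq numeral_eq_Suc)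
qed

definition split_labeling :: "int \<Rightarrow> int \<Rightarrow> nat \<Rightarrow> nat \<Rightarrow> int set" where
  "split_labeling P Q i j =
     (if split_edge i j then PIdl\<^bsub>residue_ring (P * Q)\<^esub> P else PIdl\<^bsub>residue_ring (P * Q)\<^esub> Q)"

lemma edge_labeling_split_labeling:
  assumes "1 < P" "1 < Q"
  shows "edge_labeling (P * Q) n (split_labeling P Q)"
  unfolding edge_labeling_def split_labeling_def
  using residue_ring_cgenideal_nonzero_proper[of P "P * Q"]
    residue_ring_cgenideal_nonzero_proper[of Q "P * Q"] assms
  by (simp add: split_edge_sym)

lemma splines_split_labeling_const:
  assumes "1 < P" "1 < Q" "coprime P Q" "4 \<le> n"
    and f: "f \<in> splines (P * Q) n (split_labeling P Q)" and "i < n"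
  shows "f i = f 0"
proof (rule splines_const_if_connected[OF f \<open>coprime P Q\<close> _ _ \<open>i < n\<close>])
  have P_dvd: "\<forall>x\<in>split_labeling P Q i j. P dvd x" if "split_edge i j" for i j
    using that assms(1,2) by (simp add: split_labeling_def residue_ring_cgenideal_eq)
  show "(\<lambda>i j. i < n \<and> j < n \<and> i \<noteq> j \<and> (\<forall>x\<in>split_labeling P Q i j. P dvd x))\<^sup>*\<^sup>* i 0"
    using split_edge_connected[OF \<open>4 \<le> n\<close> \<open>i < n\<close>]
    by (rule rtranclp_mono[THEN predicate2D, rotated]) (auto simp: P_dvd)
  have Q_dvd: "\<forall>x\<in>split_labeling P Q i j. Q dvd x" if "\<not> split_edge i j" for i j
    using that assms(1,2) by (simp add: split_labeling_def residue_ring_cgenideal_eq)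
  show "(\<lambda>i j. i < n \<and> j < n \<and> i \<noteq> j \<and> (\<forall>x\<in>split_labeling P Q i j. Q dvd x))\<^sup>*\<^sup>* i 0"
    using split_edge_compl_connected[OF \<open>4 \<le> n\<close> \<open>i < n\<close>]
    by (rule rtranclp_mono[THEN predicate2D, rotated]) (auto simp: Q_dvd)
qed (use \<open>4 \<le> n\<close> in simp)

theorem mainTheorem11:
  fixes p q :: int and a b n :: nat
  assumes "Factorial_Ring.prime p" and "Factorial_Ring.prime q" and "p \<noteq> q" and "a > 0" and "b > 0" and "n \<ge> 4"
  shows "\<exists>\<alpha>. edge_labeling (p ^ a * q ^ b) n \<alpha> \<and> spline_rank (p ^ a * q ^ b) n \<alpha> = 1"
proof -
  define P Q where "P = p ^ a" and "Q = q ^ b"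
  have "1 < P" "1 < Q"
    unfolding P_def Q_def using assms by (simp_all add: prime_gt_1_int)
  have "coprime P Q"
    unfolding P_def Q_def using primes_coprime[OF assms(1-3)] by simp
  have labeling: "edge_labeling (P * Q) n (split_labeling P Q)"
    using \<open>1 < P\<close> \<open>1 < Q\<close> by (rule edge_labeling_split_labeling)
  have "spline_rank (P * Q) n (split_labeling P Q) = 1"
  proof (rule spline_rank_eq_1_if_splines_const[OF labeling])
    show "1 < P * Q" "0 < n"
      using \<open>1 < P\<close> \<open>1 < Q\<close> \<open>n \<ge> 4\<close> by (auto simp: less_1_mult)
  qed (use \<open>1 < P\<close> \<open>1 < Q\<close> \<open>coprime P Q\<close> \<open>n \<ge> 4\<close> splines_split_labeling_const in blast)
  then show ?thesis
    using labeling unfolding P_def Q_def by blast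
qed

end
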